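(* Let $\beta,\mu,\alpha,\omega,\delta,m_1,m_2,a_1,a_2$ be positive real numbers and consider the system of ordinary differential equations $$\dot S = S(\beta-\mu S) - S f_2(I,V),\qquad \dot I = S f_2(I,V) - \alpha I,\qquad \dot V = -\omega V + \delta I,$$ where $$f_2(I,V)=\frac{m_1 I}{a_1+I+V}+\frac{m_2 V}{a_2+I+V}.$$ Define $$\mathcal{R}_0=\frac{m_1a_2+\frac{\delta}{\omega}m_2a_1}{\alpha a_1a_2}\cdot\frac{\beta}{\mu}.$$ Then the system has an equilibrium $(S',I',V')$ with $S'>0$, $I'>0$, $V'>0$ if and only if $\mathcal{R}_0>1$, and when $\mathcal{R}_0>1$ such a positive equilibrium is unique.
   Context: $S$ denotes susceptible fish, $I$ infected fish and $V$ free virus (rescaled); $\beta$ is the birth rate and $\mu$ the density-dependent mortality rate of susceptible fish, $\alpha$ the mortality rate of infected fish, $\delta$ the viral shedding rate, $\omega$ the viral clearance rate, and $m_1,m_2,a_1,a_2$ are parameters of the force of infection. An equilibrium is a point at which all three right-hand sides vanish; a positive (endemic) equilibrium is one with all coordinates strictly positive. *)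

theory Defs
  imports Complex_Main
begin

definition f2 :: "real \<Rightarrow> real \<Rightarrow> real \<Rightarrow> real \<Rightarrow> real \<Rightarrow> real \<Rightarrow> real" where
  "f2 m1 m2 a1 a2 I V = m1 * I / (a1 + I + V) + m2 * V / (a2 + I + V)"

definition is_equilibrium ::
  "real \<Rightarrow> real \<Rightarrow> real \<Rightarrow> real \<Rightarrow> real \<Rightarrow> real \<Rightarrow> real \<Rightarrow> real \<Rightarrow> real
   \<Rightarrow> real \<Rightarrow> real \<Rightarrow> real \<Rightarrow> bool" where
  "is_equilibrium \<beta> \<mu> \<alpha> \<omega> \<delta> m1 m2 a1 a2 S I V \<longleftrightarrow>
     S * (\<beta> - \<mu> * S) - S * f2 m1 m2 a1 a2 I V = 0 \<and>
     S * f2 m1 m2 a1 a2 I V - \<alpha> * I = 0 \<and>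
     - \<omega> * V + \<delta> * I = 0"

definition R0 ::
  "real \<Rightarrow> real \<Rightarrow> real \<Rightarrow> real \<Rightarrow> real \<Rightarrow> real \<Rightarrow> real \<Rightarrow> real \<Rightarrow> real \<Rightarrow> real" where
  "R0 \<beta> \<mu> \<alpha> \<omega> \<delta> m1 m2 a1 a2 =
     (m1 * a2 + (\<delta> / \<omega>) * m2 * a1) / (\<alpha> * a1 * a2) * (\<beta> / \<mu>)"

end

theory Submission
  imports Defs
begin

text \<open>
  At an equilibrium the viral equation forces \<open>V = (\<delta>/\<omega>) I\<close>, so the force of infection
  becomes \<open>I g(I)\<close> for an explicit positive, strictly decreasing \<open>g\<close> with \<open>I g(I)\<close> strictly
  increasing. The infected equation then gives \<open>S = \<alpha> / g(I)\<close>, and the susceptible equation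
  reduces to the scalar equation \<open>\<beta> - \<mu> \<alpha> / g(I) - I g(I) = 0\<close>. Its left-hand side is
  continuous and strictly decreasing in \<open>I \<ge> 0\<close>, tends to \<open>-\<infinity>\<close>, and is positive at
  \<open>I = 0\<close> exactly when \<open>\<R>\<^sub>0 > 1\<close>; hence it has a positive root iff \<open>\<R>\<^sub>0 > 1\<close>, and that root
  is unique.
\<close>

lemma saturating_strict_antimono:
  fixes m a c x y :: real
  assumes "m > 0" "a > 0" "c > 0" "0 \<le> x" "x < y"
  shows "m / (a + c * y) < m / (a + c * x)"
proof -
  have "0 < a + c * x" using assms by (simp add: add_pos_nonneg)
  moreover have "a + c * x < a + c * y" using assms by simp
  ultimately show ?thesis using assms by (intro frac_less2) auto
qed

lemma mult_saturating_strict_mono: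
  fixes m a c x y :: real
  assumes "m > 0" "a > 0" "c > 0" "0 \<le> x" "x < y"
  shows "x * (m / (a + c * x)) < y * (m / (a + c * y))"
proof -
  have "0 < a + c * x" "0 < a + c * y" using assms by (simp_all add: add_pos_nonneg)
  moreover have "x * m * (a + c * y) < y * m * (a + c * x)"
    using assms by (simp add: algebra_simps)
  ultimately show ?thesis by (simp add: field_simps)
qed

locale fish_virus_model =
  fixes \<beta> \<mu> \<alpha> \<omega> \<delta> m1 m2 a1 a2 :: real
  assumes pos: "\<beta> > 0" "\<mu> > 0" "\<alpha> > 0" "\<omega> > 0" "\<delta> > 0"
    "m1 > 0" "m2 > 0" "a1 > 0" "a2 > 0"
begin

definition incidence :: "real \<Rightarrow> real" where
  "incidence I = m1 / (a1 + (1 + \<delta>/\<omega>) * I) + m2 * (\<delta>/\<omega>) / (a2 + (1 + \<delta>/\<omega>) * I)"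

definition balance :: "real \<Rightarrow> real" where
  "balance I = \<beta> - \<mu> * \<alpha> / incidence I - I * incidence I"

lemma ratio_pos: "\<delta>/\<omega> > 0"
  using pos by simp

lemma one_plus_ratio_pos: "1 + \<delta>/\<omega> > 0"
  using ratio_pos by simp

lemma f2_on_viral_line: "I \<ge> 0 \<Longrightarrow> f2 m1 m2 a1 a2 I (\<delta>/\<omega> * I) = I * incidence I"
  unfolding f2_def incidence_def by (simp add: algebra_simps)

lemma incidence_pos: "I \<ge> 0 \<Longrightarrow> incidence I > 0"
  using pos ratio_pos unfolding incidence_def
  by (intro add_pos_pos divide_pos_pos add_pos_nonneg mult_nonneg_nonneg) auto

lemma incidence_strict_antimono: "0 \<le> x \<Longrightarrow> x < y \<Longrightarrow> incidence y < incidence x"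
  unfolding incidence_def using pos ratio_pos one_plus_ratio_pos
  by (intro add_strict_mono saturating_strict_antimono) auto

lemma mult_incidence_strict_mono: "0 \<le> x \<Longrightarrow> x < y \<Longrightarrow> x * incidence x < y * incidence y"
  unfolding incidence_def distrib_left using pos ratio_pos one_plus_ratio_pos
  by (intro add_strict_mono mult_saturating_strict_mono) auto

lemma balance_strict_antimono:
  assumes "0 \<le> x" "x < y"
  shows "balance y < balance x"
proof -
  have "\<mu> * \<alpha> / incidence x < \<mu> * \<alpha> / incidence y"
    using assms pos incidence_pos incidence_strict_antimono
    by (intro divide_strict_left_mono) auto
  then show ?thesis
    unfolding balance_def using mult_incidence_strict_mono[OF assms] by simp
qed

lemma balance_root_unique: "0 \<le> x \<Longrightarrow> 0 \<le> y \<Longrightarrow> balance x = 0 \<Longrightarrow> balance y = 0 \<Longrightarrow> x = y"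
  by (metis balance_strict_antimono less_irrefl linorder_cases)

lemma continuous_on_balance: "continuous_on {0..} balance"
proof -
  have "continuous_on {0..} incidence"
    unfolding incidence_def using pos ratio_pos
    by (intro continuous_intros) (auto simp: add_pos_nonneg less_imp_neq[symmetric])
  then show ?thesis
    unfolding balance_def[abs_def] using incidence_pos
    by (intro continuous_intros) (auto simp: less_imp_neq[symmetric])
qed

text \<open>
  Since \<open>incidence I \<le> M / (c I)\<close> with \<open>M = m1 + m2 \<delta>/\<omega>\<close> and \<open>c = 1 + \<delta>/\<omega>\<close>, the term
  \<open>\<mu> \<alpha> / incidence I\<close> alone exceeds \<open>\<beta>\<close> once \<open>I \<ge> \<beta> M / (\<mu> \<alpha> c)\<close>.
\<close>
lemma balance_eventually_neg: "\<exists>b>0. balance b < 0"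
proof -
  define M where "M = m1 + m2 * (\<delta>/\<omega>)"
  define c where "c = 1 + \<delta>/\<omega>"
  define b where "b = \<beta> * M / (\<mu> * \<alpha> * c)"
  have "M > 0" using pos ratio_pos unfolding M_def by (simp add: add_pos_pos)
  have "c > 0" using one_plus_ratio_pos unfolding c_def .
  have b_pos: "b > 0" unfolding b_def using pos \<open>M > 0\<close> \<open>c > 0\<close> by simp
  have "m1 / (a1 + c * b) \<le> m1 / (c * b)" "m2 * (\<delta>/\<omega>) / (a2 + c * b) \<le> m2 * (\<delta>/\<omega>) / (c * b)"
    using pos ratio_pos b_pos \<open>c > 0\<close> by (intro frac_le; simp)+
  then have "incidence b \<le> M / (c * b)"
    unfolding incidence_def c_def[symmetric] M_def by (simp add: add_divide_distrib)
  also have "\<dots> = \<mu> * \<alpha> / \<beta>"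
    unfolding b_def using pos \<open>M > 0\<close> \<open>c > 0\<close> by (simp add: field_simps)
  finally have "\<mu> * \<alpha> / (\<mu> * \<alpha> / \<beta>) \<le> \<mu> * \<alpha> / incidence b"
    using pos incidence_pos b_pos by (intro divide_left_mono) auto
  then have "\<beta> \<le> \<mu> * \<alpha> / incidence b"
    using pos by simp
  moreover have "b * incidence b > 0" using b_pos incidence_pos by simp
  ultimately show ?thesis unfolding balance_def using b_pos by (intro exI[of _ b]) auto
qed

lemma positive_root_iff: "(\<exists>I>0. balance I = 0) \<longleftrightarrow> balance 0 > 0"
proof
  assume "\<exists>I>0. balance I = 0"
  then show "balance 0 > 0" using balance_strict_antimono by force
next
  assume pos0: "balance 0 > 0"
  obtain b where "b > 0" "balance b < 0" using balance_eventually_neg by blast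
  moreover have "continuous_on {0..b} balance"
    using continuous_on_balance by (rule continuous_on_subset) auto
  ultimately obtain I where "0 \<le> I" "balance I = 0"
    using IVT2'[of balance b 0 0] pos0 by auto
  moreover from this pos0 have "I \<noteq> 0" by auto
  ultimately show "\<exists>I>0. balance I = 0" by (metis less_eq_real_def)
qed

lemma balance_0_pos_iff: "balance 0 > 0 \<longleftrightarrow> R0 \<beta> \<mu> \<alpha> \<omega> \<delta> m1 m2 a1 a2 > 1"
proof -
  have "R0 \<beta> \<mu> \<alpha> \<omega> \<delta> m1 m2 a1 a2 = incidence 0 * \<beta> / (\<mu> * \<alpha>)"
    unfolding R0_def incidence_def using pos by (simp add: field_simps)
  then have "R0 \<beta> \<mu> \<alpha> \<omega> \<delta> m1 m2 a1 a2 > 1 \<longleftrightarrow> \<mu> * \<alpha> < incidence 0 * \<beta>"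
    using pos by (simp add: pos_less_divide_eq)
  moreover have "balance 0 > 0 \<longleftrightarrow> \<mu> * \<alpha> < incidence 0 * \<beta>"
    unfolding balance_def using incidence_pos[of 0] by (simp add: pos_divide_less_eq mult.commute)
  ultimately show ?thesis by simp
qed

lemma positive_equilibrium_iff:
  "(S > 0 \<and> I > 0 \<and> V > 0 \<and> is_equilibrium \<beta> \<mu> \<alpha> \<omega> \<delta> m1 m2 a1 a2 S I V) \<longleftrightarrow>
     I > 0 \<and> balance I = 0 \<and> S = \<alpha> / incidence I \<and> V = \<delta>/\<omega> * I"
proof (cases "I > 0 \<and> V = \<delta>/\<omega> * I")
  case True
  then have I: "I > 0" and V: "V = \<delta>/\<omega> * I" by auto
  have g: "incidence I > 0" using I incidence_pos by simp
  have "(S > 0 \<and> is_equilibrium \<beta> \<mu> \<alpha> \<omega> \<delta> m1 m2 a1 a2 S I V) \<longleftrightarrow>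
          S > 0 \<and> \<beta> - \<mu> * S = I * incidence I \<and> S * incidence I = \<alpha>"
  proof -
    have "S * (\<beta> - \<mu> * S) - S * (I * incidence I) = S * (\<beta> - \<mu> * S - I * incidence I)"
      "S * (I * incidence I) - \<alpha> * I = I * (S * incidence I - \<alpha>)"
      by (simp_all add: algebra_simps)
    then show ?thesis
      unfolding is_equilibrium_def V f2_on_viral_line[OF less_imp_le[OF I]]
      using I pos by auto
  qed
  also have "\<dots> \<longleftrightarrow> balance I = 0 \<and> S = \<alpha> / incidence I"
  proof -
    have "S * incidence I = \<alpha> \<longleftrightarrow> S = \<alpha> / incidence I"
      using g by (auto simp: field_simps)
    then show ?thesis
      unfolding balance_def using g pos by (auto simp: zero_less_mult_iff)
  qed
  finally have "(S > 0 \<and> is_equilibrium \<beta> \<mu> \<alpha> \<omega> \<delta> m1 m2 a1 a2 S I V) \<longleftrightarrow>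
      balance I = 0 \<and> S = \<alpha> / incidence I" .
  moreover have "V > 0" unfolding V using ratio_pos I by (rule mult_pos_pos)
  ultimately show ?thesis using I V by blast
next
  case False
  then show ?thesis
    unfolding is_equilibrium_def using pos by (auto simp: field_simps)
qed

end

theorem mainTheorem1:
  fixes \<beta> \<mu> \<alpha> \<omega> \<delta> m1 m2 a1 a2 :: real
  assumes "\<beta> > 0" "\<mu> > 0" "\<alpha> > 0" "\<omega> > 0" "\<delta> > 0"
    "m1 > 0" "m2 > 0" "a1 > 0" "a2 > 0"
  shows "((\<exists>S I V. S > 0 \<and> I > 0 \<and> V > 0 \<and>
             is_equilibrium \<beta> \<mu> \<alpha> \<omega> \<delta> m1 m2 a1 a2 S I V)
           \<longleftrightarrow> R0 \<beta> \<mu> \<alpha> \<omega> \<delta> m1 m2 a1 a2 > 1)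
       \<and> (R0 \<beta> \<mu> \<alpha> \<omega> \<delta> m1 m2 a1 a2 > 1 \<longrightarrow>
            (\<exists>!(S, I, V). S > 0 \<and> I > 0 \<and> V > 0 \<and>
               is_equilibrium \<beta> \<mu> \<alpha> \<omega> \<delta> m1 m2 a1 a2 S I V))"
proof -
  interpret fish_virus_model \<beta> \<mu> \<alpha> \<omega> \<delta> m1 m2 a1 a2
    using assms by unfold_locales
  have existence: "(\<exists>S I V. S > 0 \<and> I > 0 \<and> V > 0 \<and>
             is_equilibrium \<beta> \<mu> \<alpha> \<omega> \<delta> m1 m2 a1 a2 S I V) \<longleftrightarrow> (\<exists>I>0. balance I = 0)"
    unfolding positive_equilibrium_iff by auto
  have "\<exists>!(S, I, V). S > 0 \<and> I > 0 \<and> V > 0 \<and> is_equilibrium \<beta> \<mu> \<alpha> \<omega> \<delta> m1 m2 a1 a2 S I V"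
    if "R0 \<beta> \<mu> \<alpha> \<omega> \<delta> m1 m2 a1 a2 > 1"
  proof -
    have "\<exists>I>0. balance I = 0"
      using that by (simp add: balance_0_pos_iff positive_root_iff)
    then obtain I where "I > 0" "balance I = 0" by blast
    then show ?thesis
      unfolding positive_equilibrium_iff
      by (intro ex1I[of _ "(\<alpha> / incidence I, I, \<delta>/\<omega> * I)"])
         (auto dest: balance_root_unique[OF less_imp_le less_imp_le])
  qed
  then show ?thesis
    using existence positive_root_iff balance_0_pos_iff by blast
qed

end
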